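(* Let $(z_t)_{t \geq 0}$ be a real-valued trend-stationary Gaussian process whose mean function $t \mapsto \mathrm{E}(z_t)$ is differentiable. If $(z_t)_{t\ge 0}$ is mean square differentiable and Markovian, then its covariance function is constant, or equivalently $(z_t)_{t \geq 0}$ is almost surely equal to its mean function plus a constant: for all $u, v \geq 0$, $z_u - \mathrm{E}(z_u) = z_v - \mathrm{E}(z_v)$ almost surely.
   Context: A real-valued Gaussian process $(z_t)_{t\ge 0}$ is called trend-stationary if it has an arbitrary mean function $m(t)=\mathrm{E}(z_t)$ and a translation-invariant covariance function, i.e. there is a function $k$ with $\mathrm{cov}(z_u,z_v)=k(u-v)$ for all $u,v\ge 0$. Differentiability of the process is understood in the mean square sense. *)

theory Defs
  imports "HOL-Probability.Probability"
begin

definition gaussian_rv :: "'a measure \<Rightarrow> ('a \<Rightarrow> real) \<Rightarrow> bool" where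
  "gaussian_rv M X \<longleftrightarrow> X \<in> borel_measurable M \<and>
     ((\<exists>\<mu> \<sigma>. \<sigma> > 0 \<and> distributed M lborel X (normal_density \<mu> \<sigma>)) \<or>
      (\<exists>c. AE x in M. X x = c))"

text \<open>Gaussian process indexed by t \<ge> 0: every finite linear combination of its
  values is Gaussian (equivalently, all finite-dimensional distributions are jointly Gaussian).\<close>
definition gaussian_process :: "'a measure \<Rightarrow> (real \<Rightarrow> 'a \<Rightarrow> real) \<Rightarrow> bool" where
  "gaussian_process M z \<longleftrightarrow>
     (\<forall>T (c :: real \<Rightarrow> real). finite T \<and> T \<subseteq> {0..} \<longrightarrow>
        gaussian_rv M (\<lambda>x. \<Sum>t\<in>T. c t * z t x))"

definition mean_fun :: "'a measure \<Rightarrow> (real \<Rightarrow> 'a \<Rightarrow> real) \<Rightarrow> real \<Rightarrow> real" where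
  "mean_fun M z t = integral\<^sup>L M (z t)"

definition cov_fun :: "'a measure \<Rightarrow> (real \<Rightarrow> 'a \<Rightarrow> real) \<Rightarrow> real \<Rightarrow> real \<Rightarrow> real" where
  "cov_fun M z u v = integral\<^sup>L M (\<lambda>x. (z u x - mean_fun M z u) * (z v x - mean_fun M z v))"

definition trend_stationary :: "'a measure \<Rightarrow> (real \<Rightarrow> 'a \<Rightarrow> real) \<Rightarrow> bool" where
  "trend_stationary M z \<longleftrightarrow>
     (\<exists>k. \<forall>u v. u \<ge> 0 \<longrightarrow> v \<ge> 0 \<longrightarrow> cov_fun M z u v = k (u - v))"

definition ms_differentiable :: "'a measure \<Rightarrow> (real \<Rightarrow> 'a \<Rightarrow> real) \<Rightarrow> bool" where
  "ms_differentiable M z \<longleftrightarrow>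
     (\<forall>t\<ge>0. \<exists>D \<in> borel_measurable M. integrable M (\<lambda>x. (D x)\<^sup>2) \<and>
        ((\<lambda>h. integral\<^sup>L M (\<lambda>x. ((z (t + h) x - z t x) / h - D x)\<^sup>2)) \<longlongrightarrow> 0)
          (at 0 within {-t..}))"

definition past_algebra :: "'a measure \<Rightarrow> (real \<Rightarrow> 'a \<Rightarrow> real) \<Rightarrow> real \<Rightarrow> 'a measure" where
  "past_algebra M z s = sigma (space M)
     {z r -` A \<inter> space M | r A. 0 \<le> r \<and> r \<le> s \<and> A \<in> sets borel}"

definition present_algebra :: "'a measure \<Rightarrow> (real \<Rightarrow> 'a \<Rightarrow> real) \<Rightarrow> real \<Rightarrow> 'a measure" where
  "present_algebra M z s = sigma (space M) {z s -` A \<inter> space M | A. A \<in> sets borel}"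

definition markovian :: "'a measure \<Rightarrow> (real \<Rightarrow> 'a \<Rightarrow> real) \<Rightarrow> bool" where
  "markovian M z \<longleftrightarrow>
     (\<forall>s t (f :: real \<Rightarrow> real). 0 \<le> s \<longrightarrow> s \<le> t \<longrightarrow> f \<in> borel_measurable borel \<longrightarrow>
        bounded (range f) \<longrightarrow>
        (AE x in M. real_cond_exp M (past_algebra M z s) (\<lambda>\<omega>. f (z t \<omega>)) x =
                    real_cond_exp M (present_algebra M z s) (\<lambda>\<omega>. f (z t \<omega>)) x))"

end

theory Submission
  imports Defs "HOL-Real_Asymp.Real_Asymp"
begin

(*
  Let k(d) = cov(z_(s+d), z_s). The Markov property lets one condition z_0 on the present z_s
  instead of the past up to s; for a Gaussian process that conditional expectation is the linear
  regression (k(s)/k(0)) (z_s - E z_s), because the regression residual is uncorrelated with, hence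
  independent of, z_s. Applied to z_t with t >= s this gives k(0) k(a + b) = k(a) k(b), so
  rho = k / k(0) is multiplicative and rho(d) = rho(d/n)^n. Mean square differentiability gives
  rho(h) >= 1 - C h^2 near 0, hence rho(d) >= (1 - C d^2/n^2)^n >= 1 - C d^2/n for all large n,
  so rho = 1 and E((z_u - E z_u) - (z_v - E z_v))^2 = 2 k(0) - 2 k(u - v) = 0.
*)

lemma integrable_mult_of_square_integrable:
  fixes f g :: "'a \<Rightarrow> real"
  assumes [measurable]: "f \<in> borel_measurable M" "g \<in> borel_measurable M"
    and "integrable M (\<lambda>x. (f x)\<^sup>2)" "integrable M (\<lambda>x. (g x)\<^sup>2)"
  shows "integrable M (\<lambda>x. f x * g x)"
proof (rule Bochner_Integration.integrable_bound)
  show "integrable M (\<lambda>x. (f x)\<^sup>2 + (g x)\<^sup>2)" using assms by auto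
  have "\<bar>a\<bar> * \<bar>b\<bar> \<le> a\<^sup>2 + b\<^sup>2" for a b :: real
  proof -
    have "2 * (\<bar>a\<bar> * \<bar>b\<bar>) \<le> a\<^sup>2 + b\<^sup>2"
      using sum_squares_bound[of "\<bar>a\<bar>" "\<bar>b\<bar>"] by (simp add: mult.assoc)
    moreover have "0 \<le> \<bar>a\<bar> * \<bar>b\<bar>" by simp
    ultimately show ?thesis by linarith
  qed
  then show "AE x in M. norm (f x * g x) \<le> norm ((f x)\<^sup>2 + (g x)\<^sup>2)"
    by (simp add: abs_mult)
qed auto

lemma square_integrable_diff:
  fixes f g :: "'a \<Rightarrow> real"
  assumes [measurable]: "f \<in> borel_measurable M" "g \<in> borel_measurable M"
    and "integrable M (\<lambda>x. (f x)\<^sup>2)" "integrable M (\<lambda>x. (g x)\<^sup>2)"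
  shows "integrable M (\<lambda>x. (f x - g x)\<^sup>2)"
proof -
  have "(\<lambda>x. (f x - g x)\<^sup>2) = (\<lambda>x. (f x)\<^sup>2 - 2 * (f x * g x) + (g x)\<^sup>2)"
    by (simp add: power2_diff algebra_simps)
  then show ?thesis
    using assms integrable_mult_of_square_integrable[of f M g] by simp
qed

lemma (in finite_measure) square_integrable_diff_const:
  fixes f :: "'a \<Rightarrow> real"
  assumes "f \<in> borel_measurable M" "integrable M (\<lambda>x. (f x)\<^sup>2)"
  shows "integrable M (\<lambda>x. (f x - c)\<^sup>2)"
  using square_integrable_diff[of f M "\<lambda>_. c"] assms by simp

lemma norm_integral_iexp_remainder_le:
  fixes X Y :: "'a \<Rightarrow> real"
  assumes [measurable]: "X \<in> borel_measurable M" "Y \<in> borel_measurable M"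
    and X2: "integrable M (\<lambda>x. (X x)\<^sup>2)"
  shows "norm (CLINT x|M. (iexp (X x) - (1 + \<i> * X x)) * iexp (Y x))
           \<le> integral\<^sup>L M (\<lambda>x. (X x)\<^sup>2) / 2"
proof -
  have bound: "norm ((iexp (X x) - (1 + \<i> * X x)) * iexp (Y x)) \<le> (X x)\<^sup>2 / 2" for x
    using iexp_approx1[of "X x" 1] by (simp add: norm_mult power2_eq_square)
  have R: "integrable M (\<lambda>x. (iexp (X x) - (1 + \<i> * X x)) * iexp (Y x))"
    by (rule Bochner_Integration.integrable_bound[of _ "\<lambda>x. (X x)\<^sup>2 / 2"])
       (use X2 bound in auto)
  then have "norm (CLINT x|M. (iexp (X x) - (1 + \<i> * X x)) * iexp (Y x))
      \<le> (\<integral>x. norm ((iexp (X x) - (1 + \<i> * X x)) * iexp (Y x)) \<partial>M)"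
    by (intro integral_norm_bound)
  also have "\<dots> \<le> (\<integral>x. (X x)\<^sup>2 / 2 \<partial>M)"
    using X2 bound R by (intro integral_mono) auto
  finally show ?thesis by simp
qed

lemma real_distribution_distr_density:
  fixes g Y :: "'a \<Rightarrow> real"
  assumes [measurable]: "g \<in> borel_measurable M" "Y \<in> borel_measurable M"
    and nonneg: "\<And>x. x \<in> space M \<Longrightarrow> 0 \<le> g x"
    and g: "integrable M g" "integral\<^sup>L M g = 1"
  shows "real_distribution (distr (density M g) borel Y)"
proof -
  have "emeasure (density M g) (space M) = (\<integral>\<^sup>+x. ennreal (g x) \<partial>M)"
    by (subst emeasure_density) (auto intro!: nn_integral_cong)
  also have "\<dots> = 1"
    using nn_integral_eq_integral[of M g] g nonneg by simp
  finally have "prob_space (density M g)"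
    by (intro prob_spaceI) simp
  then show ?thesis
    by (auto simp: real_distribution_def real_distribution_axioms_def intro!: prob_space.prob_space_distr)
qed

text \<open>Levy's uniqueness theorem, applied to the laws of \<open>Y\<close> under the normalized densities
  \<open>f\<^sup>+\<close> and \<open>f\<^sup>-\<close>.\<close>
lemma integral_mult_indicator_eq_0_of_char:
  fixes f Y :: "'a \<Rightarrow> real"
  assumes [measurable]: "f \<in> borel_measurable M" "Y \<in> borel_measurable M"
    and f: "integrable M f"
    and char_0: "\<And>b. (CLINT x|M. of_real (f x) * iexp (b * Y x)) = 0"
    and [measurable]: "B \<in> sets borel"
  shows "integral\<^sup>L M (\<lambda>x. f x * indicator B (Y x)) = 0"
proof -
  define fp where "fp x = max (f x) 0" for x
  define fn where "fn x = max (- f x) 0" for x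
  have [measurable]: "fp \<in> borel_measurable M" "fn \<in> borel_measurable M"
    unfolding fp_def fn_def by measurable
  have int: "integrable M fp" "integrable M fn"
    unfolding fp_def fn_def using f by auto
  have nonneg: "0 \<le> fp x" "0 \<le> fn x" for x
    unfolding fp_def fn_def by auto
  have f_eq: "f x = fp x - fn x" for x
    unfolding fp_def fn_def by auto
  have int_ind: "integrable M (\<lambda>x. h x * indicator B (Y x))" if "integrable M h" for h :: "'a \<Rightarrow> real"
    by (rule Bochner_Integration.integrable_bound[of _ h]) (use that in \<open>auto simp: indicator_def\<close>)
  have "(CLINT x|M. of_real (f x)) = 0"
    using char_0[of 0] by simp
  then have "integral\<^sup>L M f = 0"
    by (metis integral_complex_of_real of_real_eq_0_iff)
  then have "integral\<^sup>L M fp = integral\<^sup>L M fn"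
    unfolding f_eq using int by simp
  define m where "m = integral\<^sup>L M fp"
  show ?thesis
  proof (cases "m = 0")
    case True
    then have "AE x in M. fp x = 0" "AE x in M. fn x = 0"
      using integral_nonneg_eq_0_iff_AE[of M fp] integral_nonneg_eq_0_iff_AE[of M fn] int nonneg
        \<open>integral\<^sup>L M fp = integral\<^sup>L M fn\<close>
      by (auto simp: m_def)
    then have "AE x in M. f x * indicator B (Y x) = 0"
      by eventually_elim (simp add: f_eq)
    then have "integral\<^sup>L M (\<lambda>x. f x * indicator B (Y x)) = integral\<^sup>L M (\<lambda>_. 0 :: real)"
      by (intro integral_cong_AE) auto
    then show ?thesis
      by simp
  next
    case False
    then have "m > 0"
      unfolding m_def using nonneg by (simp add: integral_nonneg order_less_le)
    define law where "law h = distr (density M (\<lambda>x. h x / m)) borel Y" for h :: "'a \<Rightarrow> real"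
    have law_distribution: "real_distribution (law h)" if "h \<in> {fp, fn}" for h
      unfolding law_def using that int nonneg \<open>m > 0\<close> \<open>integral\<^sup>L M fp = _\<close>
      by (intro real_distribution_distr_density) (auto simp: m_def)
    have integral_law: "integral\<^sup>L (law h) \<phi> = (\<integral>x. (h x / m) *\<^sub>R \<phi> (Y x) \<partial>M)"
      if "h \<in> {fp, fn}" and [measurable]: "\<phi> \<in> borel_measurable borel"
      for h and \<phi> :: "real \<Rightarrow> 'b::{banach,second_countable_topology}"
      using that(1) nonneg \<open>m > 0\<close> unfolding law_def
      by (subst integral_distr) (auto simp: integral_density)
    have "char (law fp) b = char (law fn) b" for b
    proof -
      have int_iexp: "integrable M (\<lambda>x. (h x / m) *\<^sub>R iexp (b * Y x))" if "integrable M h" for h :: "'a \<Rightarrow> real"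
        by (rule Bochner_Integration.integrable_bound[of _ "\<lambda>x. h x / m"])
           (use that in \<open>auto simp: norm_mult\<close>)
      have char_law: "char (law h) b = (CLINT x|M. (h x / m) *\<^sub>R iexp (b * Y x))" if "h \<in> {fp, fn}" for h
        unfolding char_def by (rule integral_law[OF that]) measurable
      have "char (law fp) b - char (law fn) b =
          (CLINT x|M. (fp x / m) *\<^sub>R iexp (b * Y x) - (fn x / m) *\<^sub>R iexp (b * Y x))"
        using int_iexp[OF int(1)] int_iexp[OF int(2)] char_law[of fp] char_law[of fn] by simp
      also have "\<dots> = (CLINT x|M. of_real (f x) * iexp (b * Y x) / m)"
        by (rule Bochner_Integration.integral_cong)
           (auto simp: f_eq scaleR_conv_of_real diff_divide_distrib left_diff_distrib)
      finally show ?thesis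
        using char_0[of b] by simp
    qed
    then have "law fp = law fn"
      using Levy_uniqueness[OF law_distribution[of fp] law_distribution[of fn]] by auto
    have "(\<integral>x. (fp x / m) *\<^sub>R indicator B (Y x) \<partial>M) = integral\<^sup>L (law fp) (indicator B :: real \<Rightarrow> real)"
      by (rule integral_law[symmetric]) simp_all
    also have "\<dots> = (\<integral>x. (fn x / m) *\<^sub>R indicator B (Y x) \<partial>M)"
      unfolding \<open>law fp = law fn\<close> by (rule integral_law) simp_all
    finally have "(\<integral>x. fp x * indicator B (Y x) \<partial>M) / m = (\<integral>x. fn x * indicator B (Y x) \<partial>M) / m"
      by (simp add: mult.commute)
    then have "(\<integral>x. fp x * indicator B (Y x) \<partial>M) = (\<integral>x. fn x * indicator B (Y x) \<partial>M)"
      using \<open>m > 0\<close> by simp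
    then show ?thesis
      unfolding f_eq left_diff_distrib using int_ind int by simp
  qed
qed

lemma integral_mult_eq_if_cond_exp_eq:
  fixes U V g :: "'a \<Rightarrow> real"
  assumes F: "sigma_finite_subalgebra M F" and G: "sigma_finite_subalgebra M G"
    and [measurable]: "U \<in> borel_measurable F" "V \<in> borel_measurable G" "g \<in> borel_measurable M"
    and U: "integrable M U" and V: "integrable M V"
    and g_bounded: "\<And>x. x \<in> space M \<Longrightarrow> \<bar>g x\<bar> \<le> C"
    and cond_exp_g: "AE x in M. real_cond_exp M F g x = real_cond_exp M G g x"
    and cond_exp_U: "AE x in M. real_cond_exp M G U x = V x"
  shows "integral\<^sup>L M (\<lambda>x. U x * g x) = integral\<^sup>L M (\<lambda>x. V x * g x)"
proof -
  interpret F: sigma_finite_subalgebra M F by fact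
  interpret G: sigma_finite_subalgebra M G by fact
  have [measurable]: "U \<in> borel_measurable M" "V \<in> borel_measurable M"
    using F.subalg G.subalg by (simp_all add: measurable_from_subalg)
  have int_g: "integrable M (\<lambda>x. h x * g x)" if "integrable M h" "h \<in> borel_measurable M" for h
  proof (rule Bochner_Integration.integrable_bound[of _ "\<lambda>x. C * h x"])
    have "\<bar>h x\<bar> * \<bar>g x\<bar> \<le> \<bar>C\<bar> * \<bar>h x\<bar>" if "x \<in> space M" for x
      using mult_left_mono[OF g_bounded[OF that], of "\<bar>h x\<bar>"]
        mult_right_mono[OF abs_ge_self[of C], of "\<bar>h x\<bar>"] by (simp add: mult.commute)
    then show "AE x in M. norm (h x * g x) \<le> norm (C * h x)"
      by (simp add: abs_mult)
  qed (use that in auto)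
  have "integral\<^sup>L M (\<lambda>x. U x * g x) = integral\<^sup>L M (\<lambda>x. U x * real_cond_exp M F g x)"
    using int_g[OF U] by (intro F.real_cond_exp_intg(2)[symmetric]) auto
  also have "\<dots> = integral\<^sup>L M (\<lambda>x. U x * real_cond_exp M G g x)"
    using cond_exp_g by (intro integral_cong_AE) auto
  also have "\<dots> = integral\<^sup>L M (\<lambda>x. real_cond_exp M G g x * real_cond_exp M G U x)"
  proof -
    have "integrable M (\<lambda>x. U x * real_cond_exp M F g x)"
      using int_g[OF U] by (intro F.real_cond_exp_intg(1)) auto
    then have "integrable M (\<lambda>x. real_cond_exp M G g x * U x)"
      by (rule integrable_cong_AE[THEN iffD1, rotated 3]) (use cond_exp_g in \<open>auto simp: mult.commute\<close>)
    then show ?thesis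
      by (subst G.real_cond_exp_intg(2)) (auto simp: mult.commute)
  qed
  also have "\<dots> = integral\<^sup>L M (\<lambda>x. V x * real_cond_exp M G g x)"
    using cond_exp_U by (intro integral_cong_AE) (auto simp: mult.commute)
  also have "\<dots> = integral\<^sup>L M (\<lambda>x. V x * g x)"
    using int_g[OF V] by (intro G.real_cond_exp_intg(2)) auto
  finally show ?thesis .
qed

lemma integral_mult_eq_if_bounded_eq:
  fixes Z U V :: "'a \<Rightarrow> real"
  assumes [measurable]: "Z \<in> borel_measurable M" "U \<in> borel_measurable M" "V \<in> borel_measurable M"
    and int: "integrable M (\<lambda>x. Z x * U x)" "integrable M (\<lambda>x. Z x * V x)"
    and eq: "\<And>f. f \<in> borel_measurable borel \<Longrightarrow> bounded (range f) \<Longrightarrow>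
      integral\<^sup>L M (\<lambda>x. f (Z x) * U x) = integral\<^sup>L M (\<lambda>x. f (Z x) * V x)"
  shows "integral\<^sup>L M (\<lambda>x. Z x * U x) = integral\<^sup>L M (\<lambda>x. Z x * V x)"
proof -
  define clamp where "clamp n v = max (- real n) (min (real n) v)" for n :: nat and v :: real
  have [measurable]: "clamp n \<in> borel_measurable borel" for n
    unfolding clamp_def by measurable
  have clamp_limit: "(\<lambda>n. integral\<^sup>L M (\<lambda>x. clamp n (Z x) * W x)) \<longlonglongrightarrow> integral\<^sup>L M (\<lambda>x. Z x * W x)"
    if [measurable]: "W \<in> borel_measurable M" and W: "integrable M (\<lambda>x. Z x * W x)" for W
  proof (rule integral_dominated_convergence[where w="\<lambda>x. \<bar>Z x * W x\<bar>"])
    show "AE x in M. (\<lambda>n. clamp n (Z x) * W x) \<longlonglongrightarrow> Z x * W x"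
    proof (intro AE_I2 tendsto_mult_right tendsto_eventually)
      fix x
      show "\<forall>\<^sub>F n in sequentially. clamp n (Z x) = Z x"
        using eventually_ge_at_top[of "nat \<lceil>\<bar>Z x\<bar>\<rceil>"]
        by eventually_elim (auto simp: clamp_def)
    qed
    show "AE x in M. norm (clamp n (Z x) * W x) \<le> \<bar>Z x * W x\<bar>" for n
      by (auto simp: clamp_def abs_mult intro!: mult_right_mono)
  qed (use W in auto)
  moreover have "bounded (range (clamp n))" for n
    by (intro boundedI[of _ "real n"]) (auto simp: clamp_def)
  ultimately have "(\<lambda>n. integral\<^sup>L M (\<lambda>x. clamp n (Z x) * U x)) \<longlonglongrightarrow> integral\<^sup>L M (\<lambda>x. Z x * V x)"
    using int eq by simp
  moreover have "(\<lambda>n. integral\<^sup>L M (\<lambda>x. clamp n (Z x) * U x)) \<longlonglongrightarrow> integral\<^sup>L M (\<lambda>x. Z x * U x)"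
    using clamp_limit int by simp
  ultimately show ?thesis
    by (rule LIMSEQ_unique[rotated])
qed

lemma ge_1_if_multiplicative_and_near_1:
  fixes \<rho> :: "real \<Rightarrow> real"
  assumes mult: "\<And>a b. 0 \<le> a \<Longrightarrow> 0 \<le> b \<Longrightarrow> \<rho> (a + b) = \<rho> a * \<rho> b"
    and near: "\<And>h. 0 < h \<Longrightarrow> h < \<delta> \<Longrightarrow> 1 - C * h\<^sup>2 \<le> \<rho> h"
    and "0 < \<delta>" "0 \<le> C" "0 < d"
  shows "1 \<le> \<rho> d"
proof -
  have power: "\<rho> (real n * h) = \<rho> h ^ n" if "0 \<le> h" "0 < n" for n h
    using \<open>0 < n\<close>
  proof (induction n rule: nat_induct_non_zero)
    case (Suc n)
    then show ?case
      using mult[of h "real n * h"] \<open>0 \<le> h\<close> by (simp add: algebra_simps)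
  qed simp
  have bound: "1 - C * d\<^sup>2 / real n \<le> \<rho> d" if n: "d / \<delta> < real n" "C * d\<^sup>2 < real n" for n
  proof -
    have "0 < real n"
      using n(1) divide_pos_pos[OF \<open>0 < d\<close> \<open>0 < \<delta>\<close>] by linarith
    then have "1 \<le> real n"
      by simp
    define h where "h = d / real n"
    have "0 < h" "h < \<delta>"
      using n(1) \<open>0 < real n\<close> \<open>0 < d\<close> \<open>0 < \<delta>\<close> by (simp_all add: h_def field_simps)
    have Ch: "real n * (C * h\<^sup>2) = C * d\<^sup>2 / real n"
      using \<open>0 < real n\<close> by (simp add: h_def power2_eq_square)
    have "C * h\<^sup>2 \<le> real n * (C * h\<^sup>2)"
      using mult_right_mono[OF \<open>1 \<le> real n\<close>, of "C * h\<^sup>2"] \<open>0 \<le> C\<close> by simp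
    also have "\<dots> < 1"
      unfolding Ch using n(2) \<open>0 < real n\<close> by (simp add: field_simps)
    finally have "C * h\<^sup>2 \<le> 1"
      by simp
    have "1 - C * d\<^sup>2 / real n \<le> (1 - C * h\<^sup>2) ^ n"
      using Bernoulli_inequality[of "- (C * h\<^sup>2)" n] \<open>C * h\<^sup>2 \<le> 1\<close> Ch by simp
    also have "\<dots> \<le> \<rho> h ^ n"
      using near[OF \<open>0 < h\<close> \<open>h < \<delta>\<close>] \<open>C * h\<^sup>2 \<le> 1\<close> by (intro power_mono) auto
    also have "\<dots> = \<rho> d"
      using power[of h n] \<open>0 < h\<close> \<open>0 < real n\<close> by (simp add: h_def)
    finally show ?thesis .
  qed
  have "((\<lambda>n. 1 - C * d\<^sup>2 / real n) \<longlongrightarrow> 1) sequentially"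
    by real_asymp
  moreover have "eventually (\<lambda>n. 1 - C * d\<^sup>2 / real n \<le> \<rho> d) sequentially"
    using eventually_gt_at_top[of "nat \<lceil>d / \<delta>\<rceil>"] eventually_gt_at_top[of "nat \<lceil>C * d\<^sup>2\<rceil>"]
    by eventually_elim (metis bound real_nat_ceiling_ge of_nat_less_iff order_le_less_trans)
  ultimately show ?thesis
    by (rule tendsto_upperbound) simp
qed

section \<open>Gaussian random variables\<close>

lemma gaussian_rv_measurable: "gaussian_rv M X \<Longrightarrow> X \<in> borel_measurable M"
  by (simp add: gaussian_rv_def)

context prob_space
begin

lemma normal_distributed_integrable_char:
  assumes "0 < \<sigma>" "distributed M lborel X (normal_density \<mu> \<sigma>)"
  shows "integrable M X" "integrable M (\<lambda>x. (X x)\<^sup>2)"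
    "(CLINT x|M. iexp (X x)) = iexp \<mu> * of_real (exp (- (\<sigma>\<^sup>2) / 2))"
proof -
  define S where "S = (\<lambda>x. (X x - \<mu>) / \<sigma>)"
  have S: "distributed M lborel S std_normal_density"
    using assms normal_standard_normal_convert[of \<sigma> X \<mu>] by (simp add: S_def)
  then have [measurable]: "S \<in> borel_measurable M"
    using distributed_measurable[OF S] by simp
  have XS: "X x = \<mu> + \<sigma> * S x" for x
    using assms(1) by (simp add: S_def)
  have iS: "integrable M (\<lambda>x. S x ^ k)" for k
    using distributed_integrable[OF S, of "\<lambda>x. x ^ k"] integrable_std_normal_moment[of k]
    by simp
  show "integrable M X" "integrable M (\<lambda>x. (X x)\<^sup>2)"
    unfolding XS power2_sum using iS[of 1] iS[of 2] by (simp_all add: power_mult_distrib)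
  have "(CLINT x|M. iexp (\<sigma> * S x)) = char std_normal_distribution \<sigma>"
    using S by (simp add: char_def integral_distr distributed_distr_eq_density[symmetric])
  moreover have "(CLINT x|M. iexp (X x)) = (CLINT x|M. iexp \<mu> * iexp (\<sigma> * S x))"
    unfolding XS by (simp add: exp_add[symmetric] algebra_simps)
  ultimately show "(CLINT x|M. iexp (X x)) = iexp \<mu> * of_real (exp (- (\<sigma>\<^sup>2) / 2))"
    by (simp add: char_std_normal_distribution)
qed

text \<open>A degenerate Gaussian (almost surely constant) has variance 0, so it satisfies the same
  characteristic function formula as a normal variable.\<close>
lemma gaussian_rv_integrable_char:
  assumes "gaussian_rv M X"
  shows "integrable M X" "integrable M (\<lambda>x. (X x)\<^sup>2)"
    "(CLINT x|M. iexp (X x)) = iexp (expectation X) * of_real (exp (- variance X / 2))"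
proof -
  have [measurable]: "X \<in> borel_measurable M"
    using assms by (rule gaussian_rv_measurable)
  from assms consider (normal) \<mu> \<sigma> where "\<sigma> > 0" "distributed M lborel X (normal_density \<mu> \<sigma>)"
    | (const) c where "AE x in M. X x = c"
    by (auto simp: gaussian_rv_def)
  then have "integrable M X \<and> integrable M (\<lambda>x. (X x)\<^sup>2) \<and>
    (CLINT x|M. iexp (X x)) = iexp (expectation X) * of_real (exp (- variance X / 2))"
  proof cases
    case (normal \<mu> \<sigma>)
    then show ?thesis
      using normal_distributed_integrable_char[OF normal]
        normal_distributed_expectation[OF normal] normal_distributed_variance[OF normal]
      by simp
  next
    case (const c)
    have "integral\<^sup>L M X = c"
      using integral_cong_AE[of X M "\<lambda>_. c"] const by (simp add: prob_space)
    moreover have "variance X = 0"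
      using integral_cong_AE[of "\<lambda>x. (X x - c)\<^sup>2" M "\<lambda>_. 0"] const \<open>integral\<^sup>L M X = c\<close>
      by simp
    moreover have "(CLINT x|M. iexp (X x)) = (CLINT x|M. iexp c)"
      by (rule integral_cong_AE) (use const in auto)
    moreover have "integrable M X" "integrable M (\<lambda>x. (X x)\<^sup>2)"
      by (rule integrable_cong_AE[THEN iffD2, of _ _ "\<lambda>_. _"], use const in auto)+
    ultimately show ?thesis by (simp add: prob_space)
  qed
  then show "integrable M X" "integrable M (\<lambda>x. (X x)\<^sup>2)"
    "(CLINT x|M. iexp (X x)) = iexp (expectation X) * of_real (exp (- variance X / 2))"
    by auto
qed

lemma variance_linear_uncorrelated:
  fixes W Y :: "'a \<Rightarrow> real"
  assumes [measurable]: "W \<in> borel_measurable M" "Y \<in> borel_measurable M"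
    and W: "integrable M W" "integrable M (\<lambda>x. (W x)\<^sup>2)"
    and Y: "integrable M Y" "integrable M (\<lambda>x. (Y x)\<^sup>2)"
    and uncorr: "expectation (\<lambda>x. (W x - expectation W) * (Y x - expectation Y)) = 0"
  shows "variance (\<lambda>x. a * W x + b * Y x) = a\<^sup>2 * variance W + b\<^sup>2 * variance Y"
proof -
  define W0 where "W0 x = W x - expectation W" for x
  define Y0 where "Y0 x = Y x - expectation Y" for x
  have [measurable]: "W0 \<in> borel_measurable M" "Y0 \<in> borel_measurable M"
    unfolding W0_def Y0_def by measurable
  have W0: "integrable M (\<lambda>x. (W0 x)\<^sup>2)" and Y0: "integrable M (\<lambda>x. (Y0 x)\<^sup>2)"
    unfolding W0_def Y0_def using W Y by (auto intro: square_integrable_diff_const)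
  have "expectation (\<lambda>x. a * W x + b * Y x) = a * expectation W + b * expectation Y"
    using W Y by simp
  then have "(\<lambda>x. (a * W x + b * Y x - expectation (\<lambda>x. a * W x + b * Y x))\<^sup>2)
      = (\<lambda>x. a\<^sup>2 * (W0 x)\<^sup>2 + 2 * a * b * (W0 x * Y0 x) + b\<^sup>2 * (Y0 x)\<^sup>2)"
    by (auto simp: W0_def Y0_def power2_eq_square algebra_simps)
  moreover have "integrable M (\<lambda>x. W0 x * Y0 x)"
    using W0 Y0 by (intro integrable_mult_of_square_integrable) auto
  ultimately show ?thesis
    using W0 Y0 uncorr by (simp add: W0_def Y0_def)
qed

lemma integral_iexp_gaussian_uncorrelated:
  fixes W Y :: "'a \<Rightarrow> real"
  assumes G: "\<And>a b. gaussian_rv M (\<lambda>x. a * W x + b * Y x)"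
    and uncorr: "expectation (\<lambda>x. (W x - expectation W) * (Y x - expectation Y)) = 0"
  shows "(CLINT x|M. iexp (a * (W x - expectation W) + b * Y x)) =
    (CLINT x|M. iexp (b * Y x)) * of_real (exp (- (a\<^sup>2 * variance W) / 2))"
proof -
  have gW: "gaussian_rv M W" and gY: "gaussian_rv M Y"
    using G[of 1 0] G[of 0 1] by simp_all
  have [measurable]: "W \<in> borel_measurable M" "Y \<in> borel_measurable M"
    using gW gY by (simp_all add: gaussian_rv_measurable)
  note W = gaussian_rv_integrable_char[OF gW] and Y = gaussian_rv_integrable_char[OF gY]
  have char_lin: "(CLINT x|M. iexp (a * W x + b * Y x)) =
      iexp (a * expectation W + b * expectation Y) *
      of_real (exp (- (a\<^sup>2 * variance W + b\<^sup>2 * variance Y) / 2))" for a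
    using gaussian_rv_integrable_char(3)[OF G[of a b]] W Y
      variance_linear_uncorrelated[of W Y a b, OF _ _ _ _ _ _ uncorr]
    by (simp add: add_divide_distrib)
  have "(CLINT x|M. iexp (a * (W x - expectation W) + b * Y x)) =
      (CLINT x|M. iexp (- a * expectation W) * iexp (a * W x + b * Y x))"
    by (simp add: exp_add[symmetric] algebra_simps)
  also have "\<dots> = iexp (- a * expectation W) * (CLINT x|M. iexp (a * W x + b * Y x))"
    by simp
  also have "\<dots> = iexp (b * expectation Y) * of_real (exp (- (b\<^sup>2 * variance Y) / 2)) *
      of_real (exp (- (a\<^sup>2 * variance W) / 2))"
    unfolding char_lin
    by (simp add: exp_add[symmetric] exp_of_real[symmetric] algebra_simps flip: of_real_mult)
       (rule arg_cong[where f=exp], simp add: field_simps)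
  finally show ?thesis
    using char_lin[of 0] by simp
qed

text \<open>By the factorization above, \<open>\<lambda>a. E exp (\<i> (a (W - E W) + b Y))\<close> is constant up to
  \<open>O(a\<^sup>2)\<close>; its derivative at \<open>a = 0\<close>, \<open>\<i>\<close> times the integral below, therefore vanishes.\<close>
lemma gaussian_uncorrelated_integral_iexp:
  fixes W Y :: "'a \<Rightarrow> real"
  assumes G: "\<And>a b. gaussian_rv M (\<lambda>x. a * W x + b * Y x)"
    and uncorr: "expectation (\<lambda>x. (W x - expectation W) * (Y x - expectation Y)) = 0"
  shows "(CLINT x|M. of_real (W x - expectation W) * iexp (b * Y x)) = 0"
proof -
  have gW: "gaussian_rv M W"
    using G[of 1 0] by simp
  have [measurable]: "W \<in> borel_measurable M" "Y \<in> borel_measurable M"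
    using gW G[of 0 1] by (simp_all add: gaussian_rv_measurable)
  define W0 where "W0 x = W x - expectation W" for x
  define VW where "VW = variance W"
  define c where "c = (CLINT x|M. iexp (b * Y x))"
  define J where "J = (CLINT x|M. of_real (W0 x) * iexp (b * Y x))"
  have [measurable]: "W0 \<in> borel_measurable M"
    unfolding W0_def by measurable
  have W0: "integrable M W0" "integrable M (\<lambda>x. (W0 x)\<^sup>2)"
    unfolding W0_def using gaussian_rv_integrable_char[OF gW]
    by (auto intro: square_integrable_diff_const)
  have "VW \<ge> 0"
    unfolding VW_def by (simp add: integral_nonneg_AE)
  have "norm c \<le> 1"
    unfolding c_def using integral_norm_bound[of M "\<lambda>x. iexp (b * Y x)"] by (simp add: prob_space)
  have "norm J \<le> a * VW" if "a > 0" for a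
  proof -
    define R where "R = (CLINT x|M. (iexp (a * W0 x) - (1 + \<i> * (a * W0 x))) * iexp (b * Y x))"
    have "norm R \<le> a\<^sup>2 * VW / 2"
      using norm_integral_iexp_remainder_le[of "\<lambda>x. a * W0 x" M "\<lambda>x. b * Y x"] W0
      by (simp add: R_def VW_def W0_def power_mult_distrib)
    have exp_near_1: "\<bar>exp (- (a\<^sup>2 * VW) / 2) - 1\<bar> \<le> a\<^sup>2 * VW / 2"
      using exp_ge_add_one_self[of "- (a\<^sup>2 * VW) / 2"] \<open>VW \<ge> 0\<close> by simp
    have "c * of_real (exp (- (a\<^sup>2 * VW) / 2)) - c = c * of_real (exp (- (a\<^sup>2 * VW) / 2) - 1)"
      by (simp add: algebra_simps)
    then have "norm (c * of_real (exp (- (a\<^sup>2 * VW) / 2)) - c) = norm c * \<bar>exp (- (a\<^sup>2 * VW) / 2) - 1\<bar>"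
      by (metis norm_mult norm_of_real)
    also have "\<dots> \<le> 1 * (a\<^sup>2 * VW / 2)"
      using \<open>norm c \<le> 1\<close> exp_near_1 by (intro mult_mono) auto
    finally have "norm (c * of_real (exp (- (a\<^sup>2 * VW) / 2)) - c) \<le> a\<^sup>2 * VW / 2"
      by simp
    moreover have J_eq: "(\<i> * a) * J = (c * of_real (exp (- (a\<^sup>2 * VW) / 2)) - c) - R"
    proof -
      have "integrable M (\<lambda>x. iexp (a * W0 x + b * Y x))" "integrable M (\<lambda>x. iexp (b * Y x))"
        by (auto intro!: integrable_const_bound[where B=1])
      moreover have "integrable M (\<lambda>x. of_real (W0 x) * iexp (b * Y x))"
        by (rule Bochner_Integration.integrable_bound[where f=W0]) (use W0 in \<open>auto simp: norm_mult\<close>)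
      moreover have "R = (CLINT x|M. iexp (a * W0 x + b * Y x) - iexp (b * Y x) -
          (\<i> * a) * (of_real (W0 x) * iexp (b * Y x)))"
        unfolding R_def
        by (rule Bochner_Integration.integral_cong) (auto simp: exp_add[symmetric] algebra_simps)
      ultimately show ?thesis
        using integral_iexp_gaussian_uncorrelated[OF G uncorr, of a b]
        by (simp add: J_def c_def W0_def VW_def)
    qed
    ultimately have "norm ((\<i> * a) * J) \<le> a\<^sup>2 * VW"
      using \<open>norm R \<le> _\<close> norm_triangle_ineq4[of "c * of_real (exp (- (a\<^sup>2 * VW) / 2)) - c" R]
      unfolding J_eq by linarith
    then show ?thesis
      using \<open>a > 0\<close> by (simp add: norm_mult power2_eq_square)
  qed
  then have "norm J \<le> 0"
    by (intro tendsto_lowerbound[of "\<lambda>a. a * VW" 0 "at_right 0"])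
       (auto intro!: tendsto_eq_intros eventually_at_rightI[of 0 1])
  then show ?thesis
    by (simp add: J_def W0_def)
qed

lemma gaussian_uncorrelated_integral_indicator:
  fixes W Y :: "'a \<Rightarrow> real"
  assumes G: "\<And>a b. gaussian_rv M (\<lambda>x. a * W x + b * Y x)"
    and uncorr: "expectation (\<lambda>x. (W x - expectation W) * (Y x - expectation Y)) = 0"
    and "B \<in> sets borel"
  shows "expectation (\<lambda>x. (W x - expectation W) * indicator B (Y x)) = 0"
proof (rule integral_mult_indicator_eq_0_of_char)
  have gW: "gaussian_rv M W" and gY: "gaussian_rv M Y"
    using G[of 1 0] G[of 0 1] by simp_all
  then show "(\<lambda>x. W x - expectation W) \<in> borel_measurable M" "Y \<in> borel_measurable M"
    "integrable M (\<lambda>x. W x - expectation W)"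
    using gaussian_rv_integrable_char(1)[OF gW] by (simp_all add: gaussian_rv_measurable)
qed (use gaussian_uncorrelated_integral_iexp[OF G uncorr] assms(3) in auto)

lemma sigma_finite_subalgebra_of_subalgebra:
  "subalgebra M F \<Longrightarrow> sigma_finite_subalgebra M F"
  by (intro finite_measure_subalgebra_is_sigma_finite)
     (simp add: finite_measure_subalgebra_def finite_measure_subalgebra_axioms_def)

end

section \<open>The natural filtration\<close>

lemma space_past_algebra [simp]: "space (past_algebra M z s) = space M"
  unfolding past_algebra_def by (rule space_measure_of_conv)

lemma sets_past_algebra:
  "sets (past_algebra M z s) =
     sigma_sets (space M) {z r -` A \<inter> space M | r A. 0 \<le> r \<and> r \<le> s \<and> A \<in> sets borel}"
  unfolding past_algebra_def by (rule sets_measure_of) blast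

lemma subalgebra_past_algebra:
  assumes "\<And>r. 0 \<le> r \<Longrightarrow> r \<le> s \<Longrightarrow> z r \<in> borel_measurable M"
  shows "subalgebra M (past_algebra M z s)"
  unfolding subalgebra_def sets_past_algebra
  using assms by (auto intro!: sets.sigma_sets_subset measurable_sets)

lemma measurable_past_algebra:
  assumes "0 \<le> r" "r \<le> s"
  shows "z r \<in> borel_measurable (past_algebra M z s)"
proof (rule measurableI)
  fix A :: "real set"
  assume "A \<in> sets borel"
  then show "z r -` A \<inter> space (past_algebra M z s) \<in> sets (past_algebra M z s)"
    unfolding sets_past_algebra using assms by (auto intro: sigma_sets.Basic)
qed simp

lemma present_algebra_eq_vimage_algebra:
  "present_algebra M z s = vimage_algebra (space M) (z s) borel"
  by (simp add: present_algebra_def vimage_algebra_def)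

lemma sets_present_algebra:
  "sets (present_algebra M z s) = {z s -` A \<inter> space M | A. A \<in> sets borel}"
  unfolding present_algebra_eq_vimage_algebra by (rule sets_vimage_algebra2) simp

lemma subalgebra_present_algebra:
  "z s \<in> borel_measurable M \<Longrightarrow> subalgebra M (present_algebra M z s)"
  unfolding subalgebra_def sets_present_algebra
  by (auto simp: present_algebra_eq_vimage_algebra intro: measurable_sets)

lemma measurable_present_algebra: "z s \<in> borel_measurable (present_algebra M z s)"
  unfolding present_algebra_eq_vimage_algebra by (rule measurable_vimage_algebra1) simp

section \<open>Covariance of a Markovian Gaussian process\<close>

lemma trend_stationary_cov_fun_shift:
  assumes "trend_stationary M z" "0 \<le> v" "v \<le> u"
  shows "cov_fun M z u v = cov_fun M z (u - v) 0"
proof -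
  obtain k where "\<And>u v. 0 \<le> u \<Longrightarrow> 0 \<le> v \<Longrightarrow> cov_fun M z u v = k (u - v)"
    using assms(1) unfolding trend_stationary_def by blast
  then show ?thesis
    using assms(2,3) by simp
qed

lemma trend_stationary_cov_fun_diag:
  assumes "trend_stationary M z" "0 \<le> u"
  shows "cov_fun M z u u = cov_fun M z 0 0"
  using trend_stationary_cov_fun_shift[OF assms(1,2)] by simp

locale gaussian_process_space = prob_space +
  fixes z :: "real \<Rightarrow> 'a \<Rightarrow> real"
  assumes gaussian_process: "gaussian_process M z"
begin

lemma gaussian_rv_linear2:
  assumes "0 \<le> u" "0 \<le> v" "u \<noteq> v"
  shows "gaussian_rv M (\<lambda>x. a * z u x + b * z v x)"
  using gaussian_process assms
  unfolding gaussian_process_def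
  by (auto dest!: spec[of _ "{u, v}"] spec[of _ "\<lambda>r. if r = u then a else b"])

lemma gaussian_rv_value: "0 \<le> t \<Longrightarrow> gaussian_rv M (z t)"
  using gaussian_process unfolding gaussian_process_def
  by (auto dest!: spec[of _ "{t}"] spec[of _ "\<lambda>_. 1"])

lemma measurable_value: "0 \<le> t \<Longrightarrow> z t \<in> borel_measurable M"
  by (simp add: gaussian_rv_value gaussian_rv_measurable)

lemma integrable_value: "0 \<le> t \<Longrightarrow> integrable M (z t)"
  and integrable_square_value: "0 \<le> t \<Longrightarrow> integrable M (\<lambda>x. (z t x)\<^sup>2)"
  by (simp_all add: gaussian_rv_value gaussian_rv_integrable_char)

definition centered :: "real \<Rightarrow> 'a \<Rightarrow> real" where
  "centered t x = z t x - mean_fun M z t"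

lemma measurable_centered: "0 \<le> t \<Longrightarrow> centered t \<in> borel_measurable M"
  unfolding centered_def using measurable_value by measurable

lemma integrable_centered: "0 \<le> t \<Longrightarrow> integrable M (centered t)"
  unfolding centered_def by (simp add: integrable_value)

lemma expectation_centered: "0 \<le> t \<Longrightarrow> expectation (centered t) = 0"
  unfolding centered_def mean_fun_def by (simp add: integrable_value prob_space)

lemma integrable_square_centered: "0 \<le> t \<Longrightarrow> integrable M (\<lambda>x. (centered t x)\<^sup>2)"
  unfolding centered_def
  by (intro square_integrable_diff_const measurable_value integrable_square_value)

lemma integrable_centered_mult:
  "0 \<le> u \<Longrightarrow> 0 \<le> v \<Longrightarrow> integrable M (\<lambda>x. centered u x * centered v x)"
  by (intro integrable_mult_of_square_integrable measurable_centered integrable_square_centered)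

lemma integrable_value_mult_centered:
  "0 \<le> u \<Longrightarrow> 0 \<le> v \<Longrightarrow> integrable M (\<lambda>x. z u x * centered v x)"
  by (intro integrable_mult_of_square_integrable measurable_value measurable_centered
      integrable_square_value integrable_square_centered)

lemma cov_fun_eq_centered: "cov_fun M z u v = expectation (\<lambda>x. centered u x * centered v x)"
  by (simp add: cov_fun_def centered_def)

lemma cov_fun_commute: "cov_fun M z u v = cov_fun M z v u"
  by (simp add: cov_fun_eq_centered mult.commute)

lemma expectation_value_mult_centered:
  assumes "0 \<le> u" "0 \<le> v"
  shows "expectation (\<lambda>x. z u x * centered v x) = cov_fun M z u v"
proof -
  have "(\<lambda>x. z u x * centered v x) = (\<lambda>x. centered u x * centered v x + mean_fun M z u * centered v x)"
    by (auto simp: centered_def algebra_simps)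
  then show ?thesis
    using assms by (simp add: cov_fun_eq_centered integrable_centered_mult integrable_centered
        expectation_centered)
qed

lemma expectation_centered_diff_square:
  assumes "0 \<le> u" "0 \<le> v"
  shows "expectation (\<lambda>x. (centered u x - centered v x)\<^sup>2) =
    cov_fun M z u u - 2 * cov_fun M z u v + cov_fun M z v v"
proof -
  have "(\<lambda>x. (centered u x - centered v x)\<^sup>2) =
      (\<lambda>x. centered u x * centered u x - 2 * (centered u x * centered v x) + centered v x * centered v x)"
    by (auto simp: power2_eq_square algebra_simps)
  then show ?thesis
    using assms by (simp add: cov_fun_eq_centered integrable_centered_mult)
qed

lemma expectation_centered_add_square:
  assumes "0 \<le> u" "0 \<le> v"
  shows "expectation (\<lambda>x. (centered u x + centered v x)\<^sup>2) =
    cov_fun M z u u + 2 * cov_fun M z u v + cov_fun M z v v"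
proof -
  have "(\<lambda>x. (centered u x + centered v x)\<^sup>2) =
      (\<lambda>x. centered u x * centered u x + 2 * (centered u x * centered v x) + centered v x * centered v x)"
    by (auto simp: power2_eq_square algebra_simps)
  then show ?thesis
    using assms by (simp add: cov_fun_eq_centered integrable_centered_mult)
qed

text \<open>Gaussian regression: the residual of the linear regression of \<open>z u\<close> on \<open>z s\<close> is
  uncorrelated with, hence independent of, \<open>z s\<close>.\<close>
lemma cond_exp_present_algebra_centered:
  assumes "0 \<le> u" "0 \<le> s" "u \<noteq> s" and var_pos: "cov_fun M z s s > 0"
  shows "AE x in M. real_cond_exp M (present_algebra M z s) (centered u) x =
    cov_fun M z u s / cov_fun M z s s * centered s x"
proof -
  define \<rho> where "\<rho> = cov_fun M z u s / cov_fun M z s s"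
  define W where "W = (\<lambda>x. z u x - \<rho> * z s x)"
  have [measurable]: "z s \<in> borel_measurable M" "centered u \<in> borel_measurable M"
    "centered s \<in> borel_measurable M"
    using assms by (simp_all add: measurable_value measurable_centered)
  have W_centered: "W x - expectation W = centered u x - \<rho> * centered s x" for x
    using assms by (simp add: W_def centered_def mean_fun_def integrable_value algebra_simps)
  have gaussian: "gaussian_rv M (\<lambda>x. a * W x + b * z s x)" for a b
    using gaussian_rv_linear2[OF assms(1-3), of a "b - a * \<rho>"]
    by (simp add: W_def algebra_simps)
  have uncorr: "expectation (\<lambda>x. (W x - expectation W) * (z s x - expectation (z s))) = 0"
  proof -
    have "expectation (\<lambda>x. (W x - expectation W) * (z s x - expectation (z s))) =
        expectation (\<lambda>x. centered u x * centered s x - \<rho> * (centered s x * centered s x))"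
      unfolding W_centered by (simp add: centered_def mean_fun_def algebra_simps)
    also have "\<dots> = 0"
      using assms by (simp add: integrable_centered_mult cov_fun_eq_centered[symmetric] \<rho>_def)
    finally show ?thesis .
  qed
  have orth: "expectation (\<lambda>x. (centered u x - \<rho> * centered s x) * indicator B (z s x)) = 0"
    if "B \<in> sets borel" for B
    using gaussian_uncorrelated_integral_indicator[OF gaussian uncorr that] by (simp add: W_centered)
  interpret present: sigma_finite_subalgebra M "present_algebra M z s"
    by (intro sigma_finite_subalgebra_of_subalgebra subalgebra_present_algebra) measurable
  show ?thesis
    unfolding \<rho>_def[symmetric]
  proof (rule present.real_cond_exp_charact)
    fix A
    assume "A \<in> sets (present_algebra M z s)"
    then obtain B where B: "B \<in> sets borel" "A = z s -` B \<inter> space M"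
      by (auto simp: sets_present_algebra)
    then have "A \<in> sets M" by simp
    have "(\<integral>x\<in>A. centered u x \<partial>M) - (\<integral>x\<in>A. \<rho> * centered s x \<partial>M) =
        expectation (\<lambda>x. indicator A x *\<^sub>R centered u x - indicator A x *\<^sub>R (\<rho> * centered s x))"
      unfolding set_lebesgue_integral_def
      using integrable_mult_indicator[OF \<open>A \<in> sets M\<close> integrable_centered[OF assms(1)]]
        integrable_mult_indicator[OF \<open>A \<in> sets M\<close> integrable_mult_right[OF integrable_centered[OF assms(2)]]]
      by (intro Bochner_Integration.integral_diff[symmetric]) auto
    also have "\<dots> = expectation (\<lambda>x. (centered u x - \<rho> * centered s x) * indicator B (z s x))"
      by (rule Bochner_Integration.integral_cong) (auto simp: B(2) indicator_def)
    finally have "(\<integral>x\<in>A. centered u x \<partial>M) - (\<integral>x\<in>A. \<rho> * centered s x \<partial>M) =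
        expectation (\<lambda>x. (centered u x - \<rho> * centered s x) * indicator B (z s x))" .
    then show "(\<integral>x\<in>A. centered u x \<partial>M) = (\<integral>x\<in>A. \<rho> * centered s x \<partial>M)"
      using orth[OF B(1)] by simp
  next
    have "(\<lambda>x. \<rho> * centered s x) = (\<lambda>x. \<rho> * (z s x - mean_fun M z s))"
      by (simp add: centered_def fun_eq_iff)
    then show "(\<lambda>x. \<rho> * centered s x) \<in> borel_measurable (present_algebra M z s)"
      using measurable_present_algebra[of z s M] by simp
  qed (use assms in \<open>simp_all add: integrable_centered\<close>)
qed

lemma measurable_centered_past_algebra:
  "0 \<le> r \<Longrightarrow> r \<le> s \<Longrightarrow> centered r \<in> borel_measurable (past_algebra M z s)"
  unfolding centered_def using measurable_past_algebra[of r s z M] by measurable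

lemma cov_fun_markov_factorization:
  assumes markov: "markovian M z" and "0 < s" "s \<le> t" and var_pos: "cov_fun M z s s > 0"
  shows "cov_fun M z s s * cov_fun M z t 0 = cov_fun M z s 0 * cov_fun M z t s"
proof -
  define \<rho> where "\<rho> = cov_fun M z 0 s / cov_fun M z s s"
  have [measurable]: "z t \<in> borel_measurable M" "centered 0 \<in> borel_measurable M"
    "centered s \<in> borel_measurable M"
    using assms by (simp_all add: measurable_value measurable_centered)
  have "expectation (\<lambda>x. z t x * centered 0 x) = expectation (\<lambda>x. z t x * (\<rho> * centered s x))"
  proof (rule integral_mult_eq_if_bounded_eq)
    fix f :: "real \<Rightarrow> real"
    assume [measurable]: "f \<in> borel_measurable borel" and "bounded (range f)"
    then obtain C where C: "\<And>v. \<bar>f v\<bar> \<le> C"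
      by (auto simp: bounded_iff)
    have "expectation (\<lambda>x. centered 0 x * f (z t x)) = expectation (\<lambda>x. (\<rho> * centered s x) * f (z t x))"
    proof (rule integral_mult_eq_if_cond_exp_eq)
      show "sigma_finite_subalgebra M (past_algebra M z s)"
        by (intro sigma_finite_subalgebra_of_subalgebra subalgebra_past_algebra measurable_value)
      show "sigma_finite_subalgebra M (present_algebra M z s)"
        using \<open>0 < s\<close> by (intro sigma_finite_subalgebra_of_subalgebra subalgebra_present_algebra measurable_value) simp
      show "centered 0 \<in> borel_measurable (past_algebra M z s)"
        using \<open>0 < s\<close> by (simp add: measurable_centered_past_algebra)
      have "(\<lambda>x. \<rho> * centered s x) = (\<lambda>x. \<rho> * (z s x - mean_fun M z s))"
        by (simp add: centered_def fun_eq_iff)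
      then show "(\<lambda>x. \<rho> * centered s x) \<in> borel_measurable (present_algebra M z s)"
        using measurable_present_algebra[of z s M] by simp
      show "AE x in M. real_cond_exp M (past_algebra M z s) (\<lambda>x. f (z t x)) x =
          real_cond_exp M (present_algebra M z s) (\<lambda>x. f (z t x)) x"
        using markov \<open>0 < s\<close> \<open>s \<le> t\<close> \<open>bounded (range f)\<close> unfolding markovian_def by simp
      show "AE x in M. real_cond_exp M (present_algebra M z s) (centered 0) x = \<rho> * centered s x"
        using cond_exp_present_algebra_centered[of 0 s] \<open>0 < s\<close> var_pos by (simp add: \<rho>_def)
    qed (use C \<open>0 < s\<close> in \<open>simp_all add: integrable_centered\<close>)
    then show "expectation (\<lambda>x. f (z t x) * centered 0 x) =
        expectation (\<lambda>x. f (z t x) * (\<rho> * centered s x))"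
      by (simp add: mult.commute)
  qed (use assms integrable_mult_right[OF integrable_value_mult_centered[of t s], of \<rho>]
      in \<open>simp_all add: integrable_value_mult_centered mult.left_commute\<close>)
  also have "\<dots> = \<rho> * expectation (\<lambda>x. z t x * centered s x)"
    by (simp add: mult.left_commute)
  finally have "cov_fun M z t 0 = \<rho> * cov_fun M z t s"
    using assms by (simp add: expectation_value_mult_centered)
  then show ?thesis
    using var_pos by (simp add: \<rho>_def cov_fun_commute[of 0 s] field_simps)
qed

lemma ms_differentiable_increment_bound:
  assumes "ms_differentiable M z"
  obtains \<delta> K where "0 < \<delta>" "0 \<le> K"
    "\<And>h. 0 < h \<Longrightarrow> h < \<delta> \<Longrightarrow> expectation (\<lambda>x. (centered h x - centered 0 x)\<^sup>2) \<le> K * h\<^sup>2"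
proof -
  obtain D where [measurable]: "D \<in> borel_measurable M" and D2: "integrable M (\<lambda>x. (D x)\<^sup>2)"
    and D: "((\<lambda>h. expectation (\<lambda>x. ((z h x - z 0 x) / h - D x)\<^sup>2)) \<longlongrightarrow> 0) (at 0 within {0..})"
    using assms unfolding ms_differentiable_def by force
  obtain \<delta> where "0 < \<delta>" and close: "\<And>h. 0 < h \<Longrightarrow> h < \<delta> \<Longrightarrow>
      expectation (\<lambda>x. ((z h x - z 0 x) / h - D x)\<^sup>2) < 1"
    using order_tendstoD(2)[OF D zero_less_one] unfolding eventually_at by force
  have "expectation (\<lambda>x. (centered h x - centered 0 x)\<^sup>2) \<le> (2 + 2 * expectation (\<lambda>x. (D x)\<^sup>2)) * h\<^sup>2"
    if h: "0 < h" "h < \<delta>" for h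
  proof -
    define X where "X = (\<lambda>x. z h x - z 0 x)"
    have [measurable]: "z h \<in> borel_measurable M" "z 0 \<in> borel_measurable M"
      using h by (simp_all add: measurable_value)
    have [measurable]: "X \<in> borel_measurable M"
      unfolding X_def by measurable
    have X: "integrable M X" "integrable M (\<lambda>x. (X x)\<^sup>2)"
      unfolding X_def using h by (auto intro!: square_integrable_diff measurable_value
          integrable_square_value integrable_value)
    have Xh: "integrable M (\<lambda>x. (X x / h - D x)\<^sup>2)"
      using X by (intro square_integrable_diff D2) (auto simp: power_divide)
    have "expectation (\<lambda>x. (centered h x - centered 0 x)\<^sup>2) = variance X"
      using h by (simp add: X_def centered_def mean_fun_def integrable_value algebra_simps)
    also have "\<dots> \<le> expectation (\<lambda>x. (X x)\<^sup>2)"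
      using X by (simp add: variance_eq)
    also have "\<dots> = h\<^sup>2 * expectation (\<lambda>x. (X x / h)\<^sup>2)"
      using h by (simp add: power_divide)
    also have "\<dots> \<le> h\<^sup>2 * expectation (\<lambda>x. 2 * (X x / h - D x)\<^sup>2 + 2 * (D x)\<^sup>2)"
    proof (intro mult_left_mono integral_mono)
      have "a\<^sup>2 \<le> 2 * (a - b)\<^sup>2 + 2 * b\<^sup>2" for a b :: real
        using zero_le_power2[of "a - 2 * b"] by (simp add: power2_eq_square algebra_simps)
      then show "(X x / h)\<^sup>2 \<le> 2 * (X x / h - D x)\<^sup>2 + 2 * (D x)\<^sup>2" for x .
    qed (use X Xh D2 in \<open>auto simp: power_divide\<close>)
    also have "\<dots> \<le> (2 + 2 * expectation (\<lambda>x. (D x)\<^sup>2)) * h\<^sup>2"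
    proof -
      have "h\<^sup>2 * expectation (\<lambda>x. (X x / h - D x)\<^sup>2) \<le> h\<^sup>2 * 1"
        using close[OF h] by (intro mult_left_mono) (auto simp: X_def)
      then show ?thesis
        using Xh D2 by (simp add: algebra_simps)
    qed
    finally show ?thesis .
  qed
  moreover have "0 \<le> 2 + 2 * expectation (\<lambda>x. (D x)\<^sup>2)"
    by (simp add: integral_nonneg_AE)
  ultimately show ?thesis
    using that \<open>0 < \<delta>\<close> by blast
qed

lemma abs_cov_fun_le:
  assumes "trend_stationary M z" "0 \<le> u" "0 \<le> v"
  shows "\<bar>cov_fun M z u v\<bar> \<le> cov_fun M z 0 0"
  using expectation_centered_diff_square[OF assms(2,3)] expectation_centered_add_square[OF assms(2,3)]
    integral_nonneg_AE[of "\<lambda>x. (centered u x - centered v x)\<^sup>2" M]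
    integral_nonneg_AE[of "\<lambda>x. (centered u x + centered v x)\<^sup>2" M]
    trend_stationary_cov_fun_diag[OF assms(1,2)] trend_stationary_cov_fun_diag[OF assms(1,3)]
  by simp

lemma cov_fun_multiplicative:
  assumes "markovian M z" "trend_stationary M z" "cov_fun M z 0 0 > 0" "0 \<le> a" "0 \<le> b"
  shows "cov_fun M z 0 0 * cov_fun M z (a + b) 0 = cov_fun M z a 0 * cov_fun M z b 0"
proof (cases "a = 0")
  case False
  then have "cov_fun M z a a * cov_fun M z (a + b) 0 = cov_fun M z a 0 * cov_fun M z (a + b) a"
    using assms trend_stationary_cov_fun_diag[of M z a]
    by (intro cov_fun_markov_factorization) auto
  then show ?thesis
    using assms trend_stationary_cov_fun_diag[of M z a] trend_stationary_cov_fun_shift[of M z a "a + b"]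
    by simp
qed simp

lemma cov_fun_near_variance:
  assumes "ms_differentiable M z" "trend_stationary M z"
  obtains \<delta> K where "0 < \<delta>" "0 \<le> K"
    "\<And>h. 0 < h \<Longrightarrow> h < \<delta> \<Longrightarrow> cov_fun M z 0 0 - K * h\<^sup>2 \<le> cov_fun M z h 0"
proof -
  obtain \<delta> K where "0 < \<delta>" "0 \<le> K" and bound: "\<And>h. 0 < h \<Longrightarrow> h < \<delta> \<Longrightarrow>
      expectation (\<lambda>x. (centered h x - centered 0 x)\<^sup>2) \<le> K * h\<^sup>2"
    using ms_differentiable_increment_bound[OF assms(1)] by blast
  have "cov_fun M z 0 0 - K / 2 * h\<^sup>2 \<le> cov_fun M z h 0" if "0 < h" "h < \<delta>" for h
    using bound[OF that] expectation_centered_diff_square[of h 0]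
      trend_stationary_cov_fun_diag[OF assms(2), of h] that
    by simp
  then show ?thesis
    using \<open>0 < \<delta>\<close> \<open>0 \<le> K\<close> by (intro that[of \<delta> "K / 2"]) simp_all
qed

lemma cov_fun_eq_variance:
  assumes "markovian M z" "trend_stationary M z" "ms_differentiable M z" "0 \<le> u" "0 \<le> v"
  shows "cov_fun M z u v = cov_fun M z 0 0"
proof -
  define \<sigma>2 where "\<sigma>2 = cov_fun M z 0 0"
  have le: "\<bar>cov_fun M z u v\<bar> \<le> \<sigma>2" if "0 \<le> u" "0 \<le> v" for u v
    unfolding \<sigma>2_def using abs_cov_fun_le[OF assms(2) that] .
  have cov_shift: "cov_fun M z d 0 = \<sigma>2" if "0 \<le> d" for d
  proof (cases "d = 0 \<or> \<sigma>2 = 0")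
    case True
    then show ?thesis
      using le[of d 0] \<open>0 \<le> d\<close> by (auto simp: \<sigma>2_def)
  next
    case False
    then have "0 < d" "0 < \<sigma>2"
      using le[of 0 0] \<open>0 \<le> d\<close> by auto
    obtain \<delta> K where "0 < \<delta>" "0 \<le> K" and near:
      "\<And>h. 0 < h \<Longrightarrow> h < \<delta> \<Longrightarrow> \<sigma>2 - K * h\<^sup>2 \<le> cov_fun M z h 0"
      using cov_fun_near_variance[OF assms(3,2)] unfolding \<sigma>2_def by blast
    have "1 \<le> cov_fun M z d 0 / \<sigma>2"
    proof (rule ge_1_if_multiplicative_and_near_1[where \<rho> = "\<lambda>d. cov_fun M z d 0 / \<sigma>2"])
      show "cov_fun M z (a + b) 0 / \<sigma>2 = cov_fun M z a 0 / \<sigma>2 * (cov_fun M z b 0 / \<sigma>2)"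
        if "0 \<le> a" "0 \<le> b" for a b
        using cov_fun_multiplicative[OF assms(1,2) _ that] \<open>0 < \<sigma>2\<close>
        by (simp add: \<sigma>2_def field_simps)
      show "1 - K / \<sigma>2 * h\<^sup>2 \<le> cov_fun M z h 0 / \<sigma>2" if "0 < h" "h < \<delta>" for h
      proof -
        have "\<sigma>2 * (\<sigma>2 - K * h\<^sup>2) \<le> \<sigma>2 * cov_fun M z h 0"
          using near[OF that] \<open>0 < \<sigma>2\<close> by (intro mult_left_mono) auto
        then show ?thesis
          using \<open>0 < \<sigma>2\<close> by (simp add: field_simps algebra_simps)
      qed
    qed (use \<open>0 < \<delta>\<close> \<open>0 \<le> K\<close> \<open>0 < \<sigma>2\<close> \<open>0 < d\<close> in auto)
    then show ?thesis
      using le[of d 0] \<open>0 < \<sigma>2\<close> \<open>0 < d\<close> by (simp add: field_simps)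
  qed
  show ?thesis
  proof (cases "v \<le> u")
    case True
    then show ?thesis
      using trend_stationary_cov_fun_shift[OF assms(2,5) True] cov_shift[of "u - v"]
      by (simp add: \<sigma>2_def)
  next
    case False
    then show ?thesis
      using trend_stationary_cov_fun_shift[OF assms(2,4), of v] cov_shift[of "v - u"]
      by (simp add: \<sigma>2_def cov_fun_commute[of u v])
  qed
qed

lemma centered_eq_AE_if_cov_fun_eq:
  assumes "0 \<le> u" "0 \<le> v" "cov_fun M z u v = cov_fun M z u u" "cov_fun M z v v = cov_fun M z u u"
  shows "AE x in M. centered u x = centered v x"
proof -
  have "expectation (\<lambda>x. (centered u x - centered v x)\<^sup>2) = 0"
    using expectation_centered_diff_square[OF assms(1,2)] assms(3,4) by simp
  then have "AE x in M. (centered u x - centered v x)\<^sup>2 = 0"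
    using assms(1,2)
    by (subst (asm) integral_nonneg_eq_0_iff_AE)
       (auto intro!: square_integrable_diff measurable_centered integrable_square_centered)
  then show ?thesis
    by eventually_elim simp
qed

end

theorem lemma1:
  fixes M :: "'a measure" and z :: "real \<Rightarrow> 'a \<Rightarrow> real"
  assumes "prob_space M"
    and "gaussian_process M z"
    and "trend_stationary M z"
    and "mean_fun M z differentiable_on {0..}"
    and "ms_differentiable M z"
    and "markovian M z"
  shows "(\<forall>u v u' v'. u \<ge> 0 \<longrightarrow> v \<ge> 0 \<longrightarrow> u' \<ge> 0 \<longrightarrow> v' \<ge> 0 \<longrightarrow>
            cov_fun M z u v = cov_fun M z u' v') \<and>
         (\<forall>u v. u \<ge> 0 \<longrightarrow> v \<ge> 0 \<longrightarrow>
            (AE x in M. z u x - mean_fun M z u = z v x - mean_fun M z v))"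
proof -
  interpret gaussian_process_space M z
    using assms(1,2) by (simp add: gaussian_process_space_def gaussian_process_space_axioms_def)
  have cov: "cov_fun M z u v = cov_fun M z 0 0" if "0 \<le> u" "0 \<le> v" for u v
    using cov_fun_eq_variance[OF assms(6,3,5) that] .
  show ?thesis
  proof (intro conjI allI impI)
    fix u v u' v' :: real
    assume "0 \<le> u" "0 \<le> v" "0 \<le> u'" "0 \<le> v'"
    then show "cov_fun M z u v = cov_fun M z u' v'"
      using cov[of u v] cov[of u' v'] by simp
  next
    fix u v :: real
    assume "0 \<le> u" "0 \<le> v"
    then have "AE x in M. centered u x = centered v x"
      using cov[of u v] cov[of u u] cov[of v v] by (intro centered_eq_AE_if_cov_fun_eq) simp_all
    then show "AE x in M. z u x - mean_fun M z u = z v x - mean_fun M z v"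
      by (simp add: centered_def)
  qed
qed

end
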